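(* Let $G$ be a $1$-series-parallel graph containing the edge $X_SX_T$. Then there exist $\epsilon>0$ and $N_0$ (depending only on $G$) such that for every $N\ge N_0$, every join instance over $G$ in which each edge relation has exactly $N$ tuples has $m$-width at most $2-\epsilon$.
   Context: A join over a graph $G$: each vertex is an attribute and each edge $\{X,Y\}$ is a binary relation with schema $(X,Y)$. A $1$-series-parallel graph consists of a source vertex $X_S$, a sink vertex $X_T$, and any number of paths of arbitrary length from $X_S$ to $X_T$, pairwise sharing no vertices other than $X_S,X_T$. For a join query $\mathcal R$ (set of relations, attribute set $\mathcal A$): $\mathrm{IN}=\sum_R|R|$, $\log=\log_{\mathrm{IN}}$; for a relation $S$, $A\subseteq\mathsf{attr}(S)$, $v\in\pi_A(S)$: $\mathsf{deg}(v,S,A)=|\{t\in S:\pi_A(t)=v\}|$; $d_{S,A}=\max_v\mathsf{deg}(v,S,A)$ for $A\ne\emptyset$, $d_{S,\emptyset}=|S|$; $d(A,B,S)=\log d_{\pi_B(S),A}$. Degree configurations: buckets $B_l=[2^l,2^{l+1})$ ordered by index; $c\in\mathcal C_2$ maps each $(R,A)$, $A\subseteq\mathsf{attr}(R)$, to a bucket with $A'\subseteq A\Rightarrow c(R,A)\le c(R,A')$, $c(R,\mathsf{attr}(R))=B_0$, $c(R,\emptyset)=B_{\lfloor\log_2|R|\rfloor}$; $R(c)=\{t\in R:\forall A,\ \mathsf{deg}(\pi_A(t),R,A)\in c(R,A)\}$, $\mathcal R(c)=\{R(c)\}$. For a set $\mathcal S$ of relations and $F\subseteq\mathcal A$, $m_F(\mathcal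 S)$ is the maximum of $s_F$ subject to $s_\emptyset=0$; $s_G\le s_{G'}$ for $G\subseteq G'$; $s_{B\cup E}\le s_{A\cup E}+d(A,B,S)$ for all $S\in\mathcal S$, $E\subseteq\mathcal A$, $A\subseteq B\subseteq\mathsf{attr}(S)$. A GHD of $\mathcal S$ is a pair $(\mathcal T,\chi)$, $\mathcal T$ a tree, $\chi$ mapping nodes to subsets of $\mathcal A$, such that every $S$ has a node $t$ with $\mathsf{attr}(S)\subseteq\chi(t)$ and for each attribute the nodes containing it form a connected subtree. $\mathsf{MW}(D,\mathcal S)=\max_t m_{\chi(t)}(\mathcal S)$, $\mathsf{MW}(\mathcal S)=\min_D\mathsf{MW}(D,\mathcal S)$, and the $m$-width of the instance is $\max_{c\in\mathcal C_2}\mathsf{MW}(\mathcal R(c))$. *)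

theory Defs
  imports Complex_Main "HOL-Library.FuncSet"
begin

definition path_edges :: "'v list \<Rightarrow> 'v set set" where
  "path_edges p = {{p ! i, p ! (i + 1)} | i. i + 1 < length p}"

definition one_sp_graph :: "'v set \<Rightarrow> 'v set set \<Rightarrow> 'v \<Rightarrow> 'v \<Rightarrow> bool" where
  "one_sp_graph V E xs xt \<longleftrightarrow> xs \<noteq> xt \<and>
     (\<exists>Ps :: 'v list set. finite Ps \<and>
        (\<forall>p\<in>Ps. 2 \<le> length p \<and> hd p = xs \<and> last p = xt \<and> distinct p) \<and>
        (\<forall>p\<in>Ps. \<forall>q\<in>Ps. p \<noteq> q \<longrightarrow> set p \<inter> set q = {xs, xt}) \<and>
        V = {xs, xt} \<union> (\<Union>p\<in>Ps. set p) \<and>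
        E = (\<Union>p\<in>Ps. path_edges p))"

text \<open>A tuple over schema A is a function in extensional A (value undefined outside A).  A join query over the edge
  set E is a family rel indexed by the edges, rel e being the relation with schema e.\<close>

definition join_instance :: "'v set set \<Rightarrow> ('v set \<Rightarrow> ('v \<Rightarrow> 'd) set) \<Rightarrow> nat \<Rightarrow> bool" where
  "join_instance E rel N \<longleftrightarrow> (\<forall>e\<in>E. rel e \<subseteq> extensional e \<and> finite (rel e) \<and> card (rel e) = N)"

definition proj :: "'v set \<Rightarrow> ('v \<Rightarrow> 'd) set \<Rightarrow> ('v \<Rightarrow> 'd) set" where
  "proj B S = (\<lambda>t. restrict t B) ` S"

definition deg :: "('v \<Rightarrow> 'd) \<Rightarrow> ('v \<Rightarrow> 'd) set \<Rightarrow> 'v set \<Rightarrow> nat" where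
  "deg v S A = card {t\<in>S. restrict t A = v}"

definition dmax :: "('v \<Rightarrow> 'd) set \<Rightarrow> 'v set \<Rightarrow> nat" where
  "dmax S A = (if A = {} then card S else Max (insert 0 ((\<lambda>t. deg (restrict t A) S A) ` S)))"

definition dlog :: "real \<Rightarrow> 'v set \<Rightarrow> 'v set \<Rightarrow> ('v \<Rightarrow> 'd) set \<Rightarrow> real" where
  "dlog IN A B S = log IN (real (dmax (proj B S) A))"

definition feasible :: "real \<Rightarrow> 'v set \<Rightarrow> 'v set set \<Rightarrow> ('v set \<Rightarrow> ('v \<Rightarrow> 'd) set)
    \<Rightarrow> ('v set \<Rightarrow> real) \<Rightarrow> bool" where
  "feasible IN Att E rel s \<longleftrightarrow>
     s {} = 0 \<and>
     (\<forall>G G'. G \<subseteq> G' \<and> G' \<subseteq> Att \<longrightarrow> s G \<le> s G') \<and>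
     (\<forall>e\<in>E. \<forall>E'. E' \<subseteq> Att \<longrightarrow> (\<forall>A B. A \<subseteq> B \<and> B \<subseteq> e \<longrightarrow>
         s (B \<union> E') \<le> s (A \<union> E') + dlog IN A B (rel e)))"

definition mval :: "real \<Rightarrow> 'v set \<Rightarrow> 'v set set \<Rightarrow> ('v set \<Rightarrow> ('v \<Rightarrow> 'd) set)
    \<Rightarrow> 'v set \<Rightarrow> real" where
  "mval IN Att E rel F = Sup {s F | s. feasible IN Att E rel s}"

text \<open>A tree on a finite nonempty node set T (nodes are naturals) with a symmetric,
  irreflexive edge relation TE: connected and with |T|-1 undirected edges.\<close>
definition is_tree :: "nat set \<Rightarrow> (nat \<times> nat) set \<Rightarrow> bool" where
  "is_tree T TE \<longleftrightarrow> finite T \<and> T \<noteq> {} \<and> TE \<subseteq> T \<times> T \<and> sym TE \<and> irrefl TE \<and>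
     (\<forall>u\<in>T. \<forall>v\<in>T. (u, v) \<in> TE\<^sup>*) \<and> card TE = 2 * (card T - 1)"

definition is_ghd :: "'v set \<Rightarrow> 'v set set \<Rightarrow> nat set \<Rightarrow> (nat \<times> nat) set \<Rightarrow> (nat \<Rightarrow> 'v set) \<Rightarrow> bool" where
  "is_ghd Att E T TE \<chi> \<longleftrightarrow> is_tree T TE \<and> (\<forall>t\<in>T. \<chi> t \<subseteq> Att) \<and>
     (\<forall>e\<in>E. \<exists>t\<in>T. e \<subseteq> \<chi> t) \<and>
     (\<forall>x\<in>Att. \<forall>u\<in>T. \<forall>v\<in>T. x \<in> \<chi> u \<and> x \<in> \<chi> v \<longrightarrow>
        (u, v) \<in> (TE \<inter> ({t\<in>T. x \<in> \<chi> t} \<times> {t\<in>T. x \<in> \<chi> t}))\<^sup>*)"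

definition MW_ghd :: "real \<Rightarrow> 'v set \<Rightarrow> 'v set set \<Rightarrow> ('v set \<Rightarrow> ('v \<Rightarrow> 'd) set)
    \<Rightarrow> nat set \<Rightarrow> (nat \<Rightarrow> 'v set) \<Rightarrow> real" where
  "MW_ghd IN Att E rel T \<chi> = Max ((\<lambda>t. mval IN Att E rel (\<chi> t)) ` T)"

definition MW :: "real \<Rightarrow> 'v set \<Rightarrow> 'v set set \<Rightarrow> ('v set \<Rightarrow> ('v \<Rightarrow> 'd) set) \<Rightarrow> real" where
  "MW IN Att E rel = Inf {MW_ghd IN Att E rel T \<chi> | T TE \<chi>. is_ghd Att E T TE \<chi>}"

text \<open>Bucket l is [2^l, 2^(l+1)); a configuration c assigns to relation e (indexed by its
  attribute set) and A \<subseteq> e a bucket index c e A.\<close>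
definition in_bucket :: "nat \<Rightarrow> nat \<Rightarrow> bool" where
  "in_bucket l n \<longleftrightarrow> 2 ^ l \<le> n \<and> n < 2 ^ (l + 1)"

definition degree_configs :: "'v set set \<Rightarrow> ('v set \<Rightarrow> ('v \<Rightarrow> 'd) set) \<Rightarrow> ('v set \<Rightarrow> 'v set \<Rightarrow> nat) set" where
  "degree_configs E rel = {c. \<forall>e\<in>E.
      (\<forall>A A'. A' \<subseteq> A \<and> A \<subseteq> e \<longrightarrow> c e A \<le> c e A') \<and>
      c e e = 0 \<and>
      c e {} = nat \<lfloor>log 2 (real (card (rel e)))\<rfloor>}"

definition restrict_config :: "('v set \<Rightarrow> ('v \<Rightarrow> 'd) set) \<Rightarrow> ('v set \<Rightarrow> 'v set \<Rightarrow> nat)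
    \<Rightarrow> ('v set \<Rightarrow> ('v \<Rightarrow> 'd) set)" where
  "restrict_config rel c = (\<lambda>e. {t\<in>rel e. \<forall>A. A \<subseteq> e \<longrightarrow> in_bucket (c e A) (deg (restrict t A) (rel e) A)})"

text \<open>IN of the instance over G, and its m-width (logarithms taken base IN of the
  original instance also for the sub-instances R(c)).\<close>
definition input_size :: "'v set set \<Rightarrow> ('v set \<Rightarrow> ('v \<Rightarrow> 'd) set) \<Rightarrow> nat" where
  "input_size E rel = (\<Sum>e\<in>E. card (rel e))"

definition m_width :: "'v set \<Rightarrow> 'v set set \<Rightarrow> ('v set \<Rightarrow> ('v \<Rightarrow> 'd) set) \<Rightarrow> real" where
  "m_width V E rel = Sup {MW (real (input_size E rel)) V E (restrict_config rel c) | c. c \<in> degree_configs E rel}"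

end

theory Submission
  imports Defs
begin

text \<open>
  Fix a degree configuration c, put ell = log_IN N (at most 1) and delta = 1/(4|V|), and call a
  vertex heavy if its degree bucket in some relation of R(c) is at least N^delta. A heavy vertex
  takes at most N^(1 - delta) values, so every feasible s has s{x} <= (1 - delta) ell.
  A path from X_S to X_T without heavy vertices (its last two vertices excepted) fits into a single
  bag: the edge X_S X_T costs ell, every further vertex is reached from a light predecessor at cost
  log_IN 2 + delta ell, and N >= 4^|V| keeps the total at most (2 - delta) ell. A path with a heavy
  vertex x closes with the edge X_T X_S to a cycle, and the fan of triangles with apex x is a path
  decomposition of that cycle whose bags cost at most (1 - delta) ell + ell. Attaching all these
  path decompositions to a central bag {X_S, X_T} gives a GHD of width at most
  (2 - delta) ell <= 2 - delta, whatever the configuration c.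
\<close>

section \<open>Tree decompositions\<close>

text \<open>Both notions record only the running-intersection property; which edges the bags cover is
  stated separately.\<close>

definition tree_decomposition :: "nat set \<Rightarrow> (nat \<times> nat) set \<Rightarrow> (nat \<Rightarrow> 'v set) \<Rightarrow> bool" where
  "tree_decomposition T TE \<chi> \<longleftrightarrow> is_tree T TE \<and>
     (\<forall>x. \<forall>u\<in>T. \<forall>v\<in>T. x \<in> \<chi> u \<longrightarrow> x \<in> \<chi> v \<longrightarrow>
        (u, v) \<in> (TE \<inter> ({t\<in>T. x \<in> \<chi> t} \<times> {t\<in>T. x \<in> \<chi> t}))\<^sup>*)"

definition path_decomposition :: "nat \<Rightarrow> (nat \<Rightarrow> 'v set) \<Rightarrow> bool" where
  "path_decomposition n B \<longleftrightarrow>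
     (\<forall>x i j k. i \<le> j \<longrightarrow> j \<le> k \<longrightarrow> k < n \<longrightarrow> x \<in> B i \<longrightarrow> x \<in> B k \<longrightarrow> x \<in> B j)"

lemma rtrancl_glue:
  assumes c1: "\<forall>u\<in>A1. \<forall>v\<in>A1. (u, v) \<in> R1\<^sup>*" and c2: "\<forall>u\<in>A2. \<forall>v\<in>A2. (u, v) \<in> R2\<^sup>*"
    and a1: "a1 \<in> A1" and a2: "a2 \<in> A2" and uv: "u \<in> A1 \<union> A2" "v \<in> A1 \<union> A2"
  shows "(u, v) \<in> (R1 \<union> R2 \<union> {(a1, a2), (a2, a1)})\<^sup>*"
proof -
  let ?L = "R1 \<union> R2 \<union> {(a1, a2), (a2, a1)}"
  have m1: "R1\<^sup>* \<subseteq> ?L\<^sup>*" and m2: "R2\<^sup>* \<subseteq> ?L\<^sup>*" by (rule rtrancl_mono, blast)+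
  have "(a1, a2) \<in> ?L\<^sup>*" "(a2, a1) \<in> ?L\<^sup>*" by auto
  then have hub: "(w, a1) \<in> ?L\<^sup>* \<and> (a1, w) \<in> ?L\<^sup>*" if "w \<in> A1 \<union> A2" for w
    using that c1 c2 a1 a2 m1 m2 by (blast intro: rtrancl_trans)
  show ?thesis using hub[OF uv(1)] hub[OF uv(2)] by (blast intro: rtrancl_trans)
qed

lemma is_tree_singleton: "is_tree {u} {}"
  unfolding is_tree_def by (simp add: sym_def irrefl_def)

lemma is_tree_glue:
  assumes t1: "is_tree T1 TE1" and t2: "is_tree T2 TE2" and dj: "T1 \<inter> T2 = {}"
    and u1: "u1 \<in> T1" and u2: "u2 \<in> T2"
  shows "is_tree (T1 \<union> T2) (TE1 \<union> TE2 \<union> {(u1, u2), (u2, u1)})"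
proof -
  let ?TE = "TE1 \<union> TE2 \<union> {(u1, u2), (u2, u1)}"
  have sub: "TE1 \<subseteq> T1 \<times> T1" "TE2 \<subseteq> T2 \<times> T2" and fin: "finite T1" "finite T2"
    and ne: "T1 \<noteq> {}" "T2 \<noteq> {}" and sym: "sym TE1" "sym TE2" and irr: "irrefl TE1" "irrefl TE2"
    and conn: "\<forall>u\<in>T1. \<forall>v\<in>T1. (u, v) \<in> TE1\<^sup>*" "\<forall>u\<in>T2. \<forall>v\<in>T2. (u, v) \<in> TE2\<^sup>*"
    and card: "card TE1 = 2 * (card T1 - 1)" "card TE2 = 2 * (card T2 - 1)"
    using t1 t2 unfolding is_tree_def by blast+
  have "finite TE1" "finite TE2" using finite_subset[OF sub(1)] finite_subset[OF sub(2)] fin by auto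
  moreover have "TE1 \<inter> TE2 = {}" "(TE1 \<union> TE2) \<inter> {(u1, u2), (u2, u1)} = {}" "u1 \<noteq> u2"
    using sub dj u1 u2 by auto
  ultimately have "card ?TE = card TE1 + card TE2 + 2" by (simp add: card_Un_disjoint)
  moreover have "card (T1 \<union> T2) = card T1 + card T2" using fin dj by (simp add: card_Un_disjoint)
  moreover have "card T1 \<ge> 1" "card T2 \<ge> 1" using fin ne by (auto simp: Suc_le_eq card_gt_0_iff)
  ultimately have "card ?TE = 2 * (card (T1 \<union> T2) - 1)" using card by simp
  moreover have "sym ?TE" using sym by (auto simp: sym_def)
  moreover have "irrefl ?TE" using irr \<open>u1 \<noteq> u2\<close> by (auto simp: irrefl_def)
  moreover have "?TE \<subseteq> (T1 \<union> T2) \<times> (T1 \<union> T2)" using sub u1 u2 by auto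
  moreover have "\<forall>u\<in>T1 \<union> T2. \<forall>v\<in>T1 \<union> T2. (u, v) \<in> ?TE\<^sup>*"
    using rtrancl_glue[OF conn u1 u2] by blast
  ultimately show ?thesis using fin ne unfolding is_tree_def by blast
qed

lemma tree_decomposition_singleton: "tree_decomposition {u} {} \<chi>"
  unfolding tree_decomposition_def by (simp add: is_tree_singleton)

lemma tree_decomposition_cong:
  assumes "tree_decomposition T TE \<chi>" "\<And>t. t \<in> T \<Longrightarrow> \<chi>' t = \<chi> t"
  shows "tree_decomposition T TE \<chi>'"
proof -
  have "{t\<in>T. x \<in> \<chi>' t} = {t\<in>T. x \<in> \<chi> t}" for x using assms(2) by auto
  then show ?thesis using assms unfolding tree_decomposition_def by simp
qed

lemma tree_decomposition_glue:
  assumes d1: "tree_decomposition T1 TE1 \<chi>" and d2: "tree_decomposition T2 TE2 \<chi>"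
    and dj: "T1 \<inter> T2 = {}" and u1: "u1 \<in> T1" and u2: "u2 \<in> T2"
    and shared: "\<And>x a b. a \<in> T1 \<Longrightarrow> b \<in> T2 \<Longrightarrow> x \<in> \<chi> a \<Longrightarrow> x \<in> \<chi> b \<Longrightarrow> x \<in> \<chi> u1 \<and> x \<in> \<chi> u2"
  shows "tree_decomposition (T1 \<union> T2) (TE1 \<union> TE2 \<union> {(u1, u2), (u2, u1)}) \<chi>"
  unfolding tree_decomposition_def
proof (intro conjI allI ballI impI)
  let ?TE = "TE1 \<union> TE2 \<union> {(u1, u2), (u2, u1)}"
  show "is_tree (T1 \<union> T2) ?TE"
    using is_tree_glue[OF _ _ dj u1 u2] d1 d2 unfolding tree_decomposition_def by blast
  fix x u v
  assume uv: "u \<in> T1 \<union> T2" "v \<in> T1 \<union> T2" "x \<in> \<chi> u" "x \<in> \<chi> v"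
  let ?S = "{t \<in> T1 \<union> T2. x \<in> \<chi> t}"
  let ?S1 = "{t\<in>T1. x \<in> \<chi> t}" and ?S2 = "{t\<in>T2. x \<in> \<chi> t}"
  let ?R1 = "TE1 \<inter> (?S1 \<times> ?S1)" and ?R2 = "TE2 \<inter> (?S2 \<times> ?S2)"
  have r1: "\<forall>a\<in>?S1. \<forall>b\<in>?S1. (a, b) \<in> ?R1\<^sup>*" and r2: "\<forall>a\<in>?S2. \<forall>b\<in>?S2. (a, b) \<in> ?R2\<^sup>*"
    using d1 d2 unfolding tree_decomposition_def by blast+
  show "(u, v) \<in> (?TE \<inter> (?S \<times> ?S))\<^sup>*"
  proof (cases "u \<in> T1 \<longleftrightarrow> v \<in> T1")
    case True
    then have "(u, v) \<in> ?R1\<^sup>* \<or> (u, v) \<in> ?R2\<^sup>*" using r1 r2 uv by blast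
    moreover have "?R1 \<subseteq> ?TE \<inter> (?S \<times> ?S)" "?R2 \<subseteq> ?TE \<inter> (?S \<times> ?S)" by auto
    ultimately show ?thesis by (meson rtrancl_mono subsetD)
  next
    case False
    then have "x \<in> \<chi> u1" "x \<in> \<chi> u2" using shared uv dj by blast+
    then have "(u, v) \<in> (?R1 \<union> ?R2 \<union> {(u1, u2), (u2, u1)})\<^sup>*"
      using rtrancl_glue[OF r1 r2] u1 u2 uv by blast
    moreover have "?R1 \<union> ?R2 \<union> {(u1, u2), (u2, u1)} \<subseteq> ?TE \<inter> (?S \<times> ?S)"
      using u1 u2 \<open>x \<in> \<chi> u1\<close> \<open>x \<in> \<chi> u2\<close> by blast
    ultimately show ?thesis by (meson rtrancl_mono subsetD)
  qed
qed

lemma tree_decomposition_path: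
  assumes "path_decomposition n B" "0 < n"
  shows "\<exists>TE. tree_decomposition {z..<z+n} TE (\<lambda>t. B (t - z))"
  using assms
proof (induction n)
  case 0
  then show ?case by simp
next
  case (Suc n)
  show ?case
  proof (cases "n = 0")
    case True
    then show ?thesis using tree_decomposition_singleton by fastforce
  next
    case False
    have "path_decomposition n B" using Suc.prems unfolding path_decomposition_def by simp
    then obtain TE where "tree_decomposition {z..<z+n} TE (\<lambda>t. B (t - z))"
      using Suc.IH False by blast
    then have "tree_decomposition ({z..<z+n} \<union> {z+n}) (TE \<union> {} \<union> {(z+n-1, z+n), (z+n, z+n-1)})
        (\<lambda>t. B (t - z))"
    proof (rule tree_decomposition_glue[OF _ tree_decomposition_singleton])
      fix x a b
      assume "a \<in> {z..<z+n}" "b \<in> {z+n}" "x \<in> B (a - z)" "x \<in> B (b - z)"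
      moreover have "a - z \<le> n - 1" using \<open>a \<in> {z..<z+n}\<close> by auto
      ultimately show "x \<in> B (z + n - 1 - z) \<and> x \<in> B (z + n - z)"
        using Suc.prems(1)[unfolded path_decomposition_def, rule_format, of "a - z" "n - 1" n x] by simp
    qed (use False in auto)
    moreover have "{z..<z+n} \<union> {z+n} = {z..<z + Suc n}" by auto
    ultimately show ?thesis by metis
  qed
qed

lemma tree_decomposition_attach_path:
  assumes d: "tree_decomposition T TE \<chi>" and u: "u \<in> T"
    and p: "path_decomposition n B" and j: "j < n" "\<chi> u \<subseteq> B j"
    and bags: "\<forall>t\<in>T. \<chi> t \<subseteq> U" "\<forall>k<n. B k \<subseteq> W" and shared: "U \<inter> W \<subseteq> \<chi> u"
  shows "\<exists>T' TE' \<chi>'. tree_decomposition T' TE' \<chi>' \<and> \<chi>' ` T' = \<chi> ` T \<union> B ` {..<n}"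
proof -
  define z where "z = Suc (Max T)"
  have "finite T" using d unfolding tree_decomposition_def is_tree_def by blast
  then have fresh: "t \<notin> T" if "z \<le> t" for t
    using that unfolding z_def by (auto dest: Max_ge[OF \<open>finite T\<close>])
  define \<chi>' where "\<chi>' t = (if t \<in> T then \<chi> t else B (t - z))" for t
  obtain TE2 where "tree_decomposition {z..<z+n} TE2 (\<lambda>t. B (t - z))"
    using tree_decomposition_path[OF p] j(1) by blast
  then have d2: "tree_decomposition {z..<z+n} TE2 \<chi>'"
    by (rule tree_decomposition_cong) (simp add: \<chi>'_def fresh)
  have d1: "tree_decomposition T TE \<chi>'" by (rule tree_decomposition_cong[OF d]) (simp add: \<chi>'_def)
  have "tree_decomposition (T \<union> {z..<z+n}) (TE \<union> TE2 \<union> {(u, z + j), (z + j, u)}) \<chi>'"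
  proof (rule tree_decomposition_glue[OF d1 d2])
    show "T \<inter> {z..<z+n} = {}" using fresh by auto
    fix x a b
    assume "a \<in> T" "b \<in> {z..<z+n}" "x \<in> \<chi>' a" "x \<in> \<chi>' b"
    then have "x \<in> \<chi> a" "x \<in> B (b - z)" "b - z < n" using fresh unfolding \<chi>'_def by auto
    then have "x \<in> \<chi> u \<inter> B j" using bags shared j(2) \<open>a \<in> T\<close> by blast
    then show "x \<in> \<chi>' u \<and> x \<in> \<chi>' (z + j)" using u fresh unfolding \<chi>'_def by simp
  qed (use u j(1) in auto)
  moreover have "\<chi>' ` (T \<union> {z..<z+n}) = \<chi> ` T \<union> B ` {..<n}"
  proof -
    have "{z..<z+n} = (\<lambda>k. k + z) ` {..<n}"
      by (simp add: lessThan_atLeast0 add.commute)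
    moreover have "\<chi>' (k + z) = B k" for k using fresh unfolding \<chi>'_def by simp
    ultimately have "\<chi>' ` {z..<z+n} = B ` {..<n}" by (simp add: image_image)
    moreover have "\<chi>' ` T = \<chi> ` T" unfolding \<chi>'_def by simp
    ultimately show ?thesis by (simp add: image_Un)
  qed
  ultimately show ?thesis by blast
qed

lemma tree_decomposition_star:
  fixes K :: "'v set" and W :: "'i \<Rightarrow> 'v set" and Ed :: "'i \<Rightarrow> 'v set set"
  assumes "finite I"
    and overlap: "\<And>i i'. i \<in> I \<Longrightarrow> i' \<in> I \<Longrightarrow> i \<noteq> i' \<Longrightarrow> W i \<inter> W i' \<subseteq> K"
    and "P K"
    and legs: "\<And>i. i \<in> I \<Longrightarrow> \<exists>n B j. path_decomposition n B \<and> j < n \<and> K \<subseteq> B j \<and>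
        (\<forall>k<n. B k \<subseteq> W i \<and> P (B k)) \<and> (\<forall>e\<in>Ed i. \<exists>k<n. e \<subseteq> B k)"
  shows "\<exists>T TE (\<chi> :: nat \<Rightarrow> 'v set). tree_decomposition T TE \<chi> \<and> K \<in> \<chi> ` T \<and>
           (\<forall>b\<in>\<chi> ` T. b \<subseteq> K \<union> \<Union>(W ` I) \<and> P b) \<and> (\<forall>i\<in>I. \<forall>e\<in>Ed i. \<exists>b\<in>\<chi> ` T. e \<subseteq> b)"
proof -
  have "\<exists>T TE (\<chi> :: nat \<Rightarrow> 'v set). tree_decomposition T TE \<chi> \<and> K \<in> \<chi> ` T \<and>
          (\<forall>b\<in>\<chi> ` T. b \<subseteq> K \<union> \<Union>(W ` F) \<and> P b) \<and> (\<forall>i\<in>F. \<forall>e\<in>Ed i. \<exists>b\<in>\<chi> ` T. e \<subseteq> b)"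
    if "F \<subseteq> I" for F
    using finite_subset[OF that \<open>finite I\<close>] that
  proof (induction F rule: finite_induct)
    case empty
    show ?case
      using tree_decomposition_singleton[of 0 "\<lambda>_. K"] \<open>P K\<close>
      by (intro exI[of _ "{0}"] exI[of _ "{}"] exI[of _ "\<lambda>_. K"]) simp
  next
    case (insert i F)
    have "i \<in> I" "F \<subseteq> I" using insert.prems by simp_all
    then obtain T TE and \<chi> :: "nat \<Rightarrow> 'v set" where d: "tree_decomposition T TE \<chi>"
      and K: "K \<in> \<chi> ` T" and bags: "\<forall>b\<in>\<chi> ` T. b \<subseteq> K \<union> \<Union>(W ` F) \<and> P b"
      and cover: "\<forall>i\<in>F. \<forall>e\<in>Ed i. \<exists>b\<in>\<chi> ` T. e \<subseteq> b"
      using insert.IH[OF \<open>F \<subseteq> I\<close>] by (elim exE conjE) (rule that)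
    obtain u where u: "u \<in> T" "\<chi> u = K" using K by (rule imageE) simp
    obtain n B j where p: "path_decomposition n B" and j: "j < n" "K \<subseteq> B j"
      and leg: "\<forall>k<n. B k \<subseteq> W i \<and> P (B k)" and leg_cover: "\<forall>e\<in>Ed i. \<exists>k<n. e \<subseteq> B k"
      using legs[OF \<open>i \<in> I\<close>] by (elim exE conjE) (rule that)
    have "(K \<union> \<Union>(W ` F)) \<inter> W i \<subseteq> K"
      using overlap[OF \<open>i \<in> I\<close>] \<open>F \<subseteq> I\<close> insert.hyps(2) by fastforce
    then have "\<exists>T' TE' \<chi>'. tree_decomposition T' TE' \<chi>' \<and> \<chi>' ` T' = \<chi> ` T \<union> B ` {..<n}"
      using bags leg u j by (intro tree_decomposition_attach_path[OF d u(1) p j(1)]) auto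
    then obtain T' TE' \<chi>' where "tree_decomposition T' TE' \<chi>'" "\<chi>' ` T' = \<chi> ` T \<union> B ` {..<n}"
      by (elim exE conjE) (rule that)
    moreover have "\<forall>b\<in>\<chi> ` T \<union> B ` {..<n}. b \<subseteq> K \<union> \<Union>(W ` insert i F) \<and> P b"
      using bags leg by auto
    moreover have "\<forall>i'\<in>insert i F. \<forall>e\<in>Ed i'. \<exists>b\<in>\<chi> ` T \<union> B ` {..<n}. e \<subseteq> b"
      using cover leg_cover by (auto simp: bex_Un)
    moreover have "K \<in> \<chi> ` T \<union> B ` {..<n}" using K by blast
    ultimately show ?case by (intro exI[of _ T'] exI[of _ TE'] exI[of _ \<chi>']) simp
  qed
  from this[OF order_refl] show ?thesis .
qed

section \<open>Fans over a cycle\<close>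

definition cycle_edges :: "'v list \<Rightarrow> 'v set set" where
  "cycle_edges q = {{q ! i, q ! (Suc i mod length q)} | i. i < length q}"

lemma cycle_edges_rotate_subset: "cycle_edges (rotate j q) \<subseteq> cycle_edges q"
proof
  fix e assume "e \<in> cycle_edges (rotate j q)"
  then obtain i where i: "i < length q" and e: "e = {rotate j q ! i, rotate j q ! (Suc i mod length q)}"
    unfolding cycle_edges_def by auto
  define m where "m = (j + i) mod length q"
  have "rotate j q ! i = q ! m" using i unfolding m_def by (simp add: nth_rotate)
  moreover have "Suc i mod length q < length q" using mod_less_divisor[of "length q" "Suc i"] i by linarith
  then have "rotate j q ! (Suc i mod length q) = q ! ((j + Suc i) mod length q)"
    by (simp add: nth_rotate mod_add_right_eq)
  moreover have "(j + Suc i) mod length q = Suc m mod length q"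
    unfolding m_def by (simp add: mod_Suc_eq)
  moreover have "m < length q" using mod_less_divisor[of "length q" "j + i"] i unfolding m_def by linarith
  ultimately have "e = {q ! m, q ! (Suc m mod length q)}" "m < length q" using e by simp_all
  then show "e \<in> cycle_edges q" unfolding cycle_edges_def by blast
qed

lemma cycle_edges_rotate: "cycle_edges (rotate j q) = cycle_edges q"
proof
  show "cycle_edges (rotate j q) \<subseteq> cycle_edges q" by (rule cycle_edges_rotate_subset)
  have "rotate ((length q - 1) * j) (rotate j q) = q"
  proof (cases "q = []")
    case False
    then have "(length q - 1) * j + j = length q * j" by (cases "length q") auto
    then have "rotate ((length q - 1) * j) (rotate j q) = rotate (length q * j) q"
      by (simp add: rotate_rotate)
    also have "\<dots> = q" by (subst rotate_conv_mod) simp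
    finally show ?thesis .
  qed simp
  moreover have "cycle_edges (rotate ((length q - 1) * j) (rotate j q)) \<subseteq> cycle_edges (rotate j q)"
    by (rule cycle_edges_rotate_subset)
  ultimately show "cycle_edges q \<subseteq> cycle_edges (rotate j q)" by simp
qed

lemma cycle_edges_eq:
  assumes "q \<noteq> []"
  shows "cycle_edges q = insert {last q, hd q} (path_edges q)"
proof -
  have "{q ! i, q ! (Suc i mod length q)} \<in> insert {last q, hd q} (path_edges q)" if "i < length q" for i
  proof (cases "Suc i < length q")
    case True
    then show ?thesis unfolding path_edges_def by auto
  next
    case False
    then have "i = length q - 1" using that by simp
    then show ?thesis using assms by (simp add: last_conv_nth hd_conv_nth)
  qed
  moreover have "{q ! i, q ! (i + 1)} \<in> cycle_edges q" if "i + 1 < length q" for i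
    using that unfolding cycle_edges_def by (auto intro!: exI[of _ i])
  moreover have "{last q, hd q} \<in> cycle_edges q"
    using assms unfolding cycle_edges_def
    by (auto simp: last_conv_nth hd_conv_nth intro!: exI[of _ "length q - 1"])
  ultimately show ?thesis unfolding cycle_edges_def path_edges_def by blast
qed

lemma fan_path_decomposition:
  assumes "distinct q"
  shows "path_decomposition (length q - 2) (\<lambda>k. {q ! 0, q ! (k + 1), q ! (k + 2)})"
  unfolding path_decomposition_def
proof (intro allI impI)
  fix x i m k
  assume "i \<le> m" "m \<le> k" "k < length q - 2"
    and x: "x \<in> {q ! 0, q ! (i + 1), q ! (i + 2)}" "x \<in> {q ! 0, q ! (k + 1), q ! (k + 2)}"
  show "x \<in> {q ! 0, q ! (m + 1), q ! (m + 2)}"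
  proof (cases "x = q ! 0 \<or> m = i \<or> m = k")
    case False
    then obtain a b where "a \<in> {i + 1, i + 2}" "b \<in> {k + 1, k + 2}" "q ! a = q ! b"
      using x by auto
    moreover have "a \<noteq> b" "a < length q" "b < length q"
      using False \<open>i \<le> m\<close> \<open>m \<le> k\<close> \<open>k < length q - 2\<close> calculation(1,2) by auto
    ultimately show ?thesis using assms by (simp add: nth_eq_iff_index_eq)
  qed (use x in auto)
qed

lemma fan_covers_cycle_edges:
  assumes "3 \<le> length q" "e \<in> cycle_edges q"
  shows "\<exists>k<length q - 2. e \<subseteq> {q ! 0, q ! (k + 1), q ! (k + 2)}"
proof -
  obtain r where r: "r < length q" "e = {q ! r, q ! (Suc r mod length q)}"
    using assms(2) unfolding cycle_edges_def by auto
  have "r = 0 \<or> (0 < r \<and> r + 1 < length q) \<or> r = length q - 1" using r(1) by linarith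
  then consider "r = 0" | "0 < r" "r + 1 < length q" | "r = length q - 1" by blast
  then show ?thesis
  proof cases
    case 1
    then show ?thesis using assms(1) r by (intro exI[of _ 0]) auto
  next
    case 2
    then show ?thesis using r by (intro exI[of _ "r - 1"]) auto
  next
    case 3
    then have "Suc r = length q" using assms(1) by simp
    then have "Suc r mod length q = 0" by simp
    moreover have "length q - 3 + 2 = r" "length q - 3 < length q - 2" using 3 assms(1) by auto
    ultimately show ?thesis using r by (intro exI[of _ "length q - 3"]) auto
  qed
qed

section \<open>Degree bounds in a degree configuration\<close>

lemma log_of_nat_nonneg: "1 < b \<Longrightarrow> 0 \<le> log b (real n)"
  by (cases "n = 0") (auto simp: log_def)

lemma log_of_nat_le:
  assumes "1 < b" "real n \<le> y" "1 \<le> y"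
  shows "log b (real n) \<le> log b y"
proof (cases "n = 0")
  case True
  then show ?thesis using assms by (simp add: log_def)
next
  case False
  then show ?thesis using assms by simp
qed

lemma log_of_nat_mono: "1 < b \<Longrightarrow> m \<le> n \<Longrightarrow> log b (real m) \<le> log b (real n)"
  using log_of_nat_le[of b m "real n"] by (cases "n = 0") auto

lemma restrict_config_subset: "restrict_config rel c e \<subseteq> rel e"
  unfolding restrict_config_def by auto

lemma dlog_empty: "dlog IN {} B S = log IN (real (card (proj B S)))"
  unfolding dlog_def dmax_def by simp

lemma card_proj_restrict_config_le:
  assumes "finite (rel e)"
  shows "card (proj B (restrict_config rel c e)) \<le> card (rel e)"
proof -
  have "finite (restrict_config rel c e)"
    using assms restrict_config_subset finite_subset by metis
  then have "card (proj B (restrict_config rel c e)) \<le> card (restrict_config rel c e)"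
    unfolding proj_def by (rule card_image_le)
  also have "\<dots> \<le> card (rel e)" using assms restrict_config_subset by (rule card_mono)
  finally show ?thesis .
qed

lemma card_proj_singleton_restrict_config:
  assumes fin: "finite (rel e)" and x: "x \<in> e"
  shows "card (proj {x} (restrict_config rel c e)) * 2 ^ c e {x} \<le> card (rel e)"
proof -
  let ?P = "proj {x} (restrict_config rel c e)"
  let ?F = "\<lambda>v. {t \<in> rel e. restrict t {x} = v}"
  have "finite ?P" unfolding proj_def
    using fin restrict_config_subset finite_subset by (metis finite_imageI)
  have "2 ^ c e {x} \<le> card (?F v)" if v: "v \<in> ?P" for v
  proof -
    obtain t where t: "t \<in> restrict_config rel c e" "v = restrict t {x}"
      using v unfolding proj_def by auto
    then have "in_bucket (c e {x}) (deg v (rel e) {x})" using x unfolding restrict_config_def by auto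
    then show ?thesis unfolding in_bucket_def deg_def by simp
  qed
  then have "card ?P * 2 ^ c e {x} \<le> (\<Sum>v\<in>?P. card (?F v))"
    using sum_bounded_below[of ?P "2 ^ c e {x}" "\<lambda>v. card (?F v)"] by (simp add: mult.commute)
  also have "\<dots> = card (\<Union>v\<in>?P. ?F v)"
    by (rule card_UN_disjoint[symmetric]) (use \<open>finite ?P\<close> fin in auto)
  also have "\<dots> \<le> card (rel e)" by (rule card_mono) (use fin in auto)
  finally show ?thesis .
qed

lemma dmax_singleton_restrict_config_le:
  assumes fin: "finite (rel e)" and ext: "rel e \<subseteq> extensional e" and x: "x \<in> e"
  shows "dmax (proj e (restrict_config rel c e)) {x} \<le> 2 ^ Suc (c e {x})"
proof -
  let ?R = "restrict_config rel c e"
  have "restrict t e = t" if "t \<in> ?R" for t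
    using that ext restrict_config_subset by (metis extensional_restrict subsetD)
  then have proj_R: "proj e ?R = ?R" unfolding proj_def by simp
  have "deg (restrict t {x}) ?R {x} \<le> 2 ^ Suc (c e {x})" if "t \<in> ?R" for t
  proof -
    have "deg (restrict t {x}) ?R {x} \<le> deg (restrict t {x}) (rel e) {x}"
      unfolding deg_def by (rule card_mono) (use fin restrict_config_subset in auto)
    moreover have "in_bucket (c e {x}) (deg (restrict t {x}) (rel e) {x})"
      using that x unfolding restrict_config_def by auto
    ultimately show ?thesis unfolding in_bucket_def by simp
  qed
  moreover have "finite ?R" using fin restrict_config_subset finite_subset by metis
  ultimately show ?thesis unfolding dmax_def proj_R by (auto intro!: Max.boundedI)
qed

lemma feasible_empty: "feasible IN Att E rel s \<Longrightarrow> s {} = 0"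
  unfolding feasible_def by (elim conjE)

lemma feasible_mono: "feasible IN Att E rel s \<Longrightarrow> G \<subseteq> G' \<Longrightarrow> G' \<subseteq> Att \<Longrightarrow> s G \<le> s G'"
  unfolding feasible_def by meson

lemma feasible_step:
  assumes "feasible IN Att E rel s" "e \<in> E" "X \<subseteq> Att" "A \<subseteq> B" "B \<subseteq> e"
  shows "s (B \<union> X) \<le> s (A \<union> X) + dlog IN A B (rel e)"
  using assms(1)[unfolded feasible_def] assms(2-) by simp

lemma feasible_zero: "1 < IN \<Longrightarrow> feasible IN Att E rel (\<lambda>_. 0)"
  unfolding feasible_def dlog_def using log_of_nat_nonneg by auto

lemma mval_le:
  assumes "1 < IN" "\<And>s. feasible IN Att E rel s \<Longrightarrow> s F \<le> b"
  shows "mval IN Att E rel F \<le> b"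
  unfolding mval_def using feasible_zero[OF assms(1)] assms(2) by (intro cSup_least) auto

lemma mval_nonneg:
  assumes "1 < IN" "\<And>s. feasible IN Att E rel s \<Longrightarrow> s F \<le> b"
  shows "0 \<le> mval IN Att E rel F"
proof -
  have "bdd_above {s F | s. feasible IN Att E rel s}" unfolding bdd_above_def using assms(2) by blast
  moreover have "0 \<in> {s F | s. feasible IN Att E rel s}" using feasible_zero[OF assms(1)] by force
  ultimately show ?thesis unfolding mval_def by (rule cSup_upper[rotated])
qed

lemma MW_le_MW_ghd:
  assumes ghd: "is_ghd Att E T TE \<chi>" and nonneg: "\<And>F. F \<subseteq> Att \<Longrightarrow> 0 \<le> mval IN Att E rel F"
  shows "MW IN Att E rel \<le> MW_ghd IN Att E rel T \<chi>"
  unfolding MW_def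
proof (rule cInf_lower)
  show "MW_ghd IN Att E rel T \<chi> \<in> {MW_ghd IN Att E rel T \<chi> | T TE \<chi>. is_ghd Att E T TE \<chi>}"
    using ghd by blast
  show "bdd_below {MW_ghd IN Att E rel T \<chi> | T TE \<chi>. is_ghd Att E T TE \<chi>}"
  proof (rule bdd_belowI)
    fix y assume "y \<in> {MW_ghd IN Att E rel T \<chi> | T TE \<chi>. is_ghd Att E T TE \<chi>}"
    then obtain T' TE' \<chi>' where y: "y = MW_ghd IN Att E rel T' \<chi>'" and g: "is_ghd Att E T' TE' \<chi>'"
      by blast
    have "finite T'" "T' \<noteq> {}" "\<forall>t\<in>T'. \<chi>' t \<subseteq> Att"
      using g by (simp_all add: is_ghd_def is_tree_def)
    then obtain t where t: "t \<in> T'" "\<chi>' t \<subseteq> Att" by blast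
    then have "0 \<le> mval IN Att E rel (\<chi>' t)" using nonneg by blast
    also have "\<dots> \<le> y" unfolding y MW_ghd_def using \<open>finite T'\<close> t by (intro Max_ge) auto
    finally show "0 \<le> y" .
  qed
qed

lemma feasible_edge_le:
  assumes f: "feasible IN Att E (restrict_config rel c) s" and IN: "1 < IN"
    and e: "e \<in> E" and X: "X \<subseteq> Att" and fin: "finite (rel e)"
  shows "s (e \<union> X) \<le> s X + log IN (real (card (rel e)))"
proof -
  have "s (e \<union> X) \<le> s X + dlog IN {} e (restrict_config rel c e)"
    using feasible_step[OF f e X, of "{}" e] by simp
  moreover have "dlog IN {} e (restrict_config rel c e) \<le> log IN (real (card (rel e)))"
    unfolding dlog_empty using card_proj_restrict_config_le[of rel e e c] fin
    by (intro log_of_nat_mono[OF IN])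
  ultimately show ?thesis by (meson add_left_mono order_trans)
qed

lemma feasible_light_le:
  assumes f: "feasible IN Att E (restrict_config rel c) s" and IN: "1 < IN"
    and e: "e \<in> E" and X: "X \<subseteq> Att" and fin: "finite (rel e)" and ext: "rel e \<subseteq> extensional e"
    and y: "y \<in> e" "y \<in> X"
  shows "s (e \<union> X) \<le> s X + log IN (2 ^ Suc (c e {y}))"
proof -
  have "s (e \<union> X) \<le> s X + dlog IN {y} e (restrict_config rel c e)"
    using feasible_step[OF f e X, of "{y}" e] y by (simp add: insert_absorb)
  moreover have "real (dmax (proj e (restrict_config rel c e)) {y}) \<le> 2 ^ Suc (c e {y})"
    using dmax_singleton_restrict_config_le[of rel e y c, OF fin ext y(1)]
      of_nat_le_iff[of "dmax (proj e (restrict_config rel c e)) {y}" "2 ^ Suc (c e {y})", where 'a=real]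
    by simp
  then have "dlog IN {y} e (restrict_config rel c e) \<le> log IN (2 ^ Suc (c e {y}))"
    unfolding dlog_def by (rule log_of_nat_le[OF IN]) (simp del: power_Suc)
  ultimately show ?thesis by (meson add_left_mono order_trans)
qed

lemma feasible_heavy_le:
  assumes f: "feasible IN Att E (restrict_config rel c) s" and IN: "1 < IN"
    and e: "e \<in> E" and fin: "finite (rel e)" and y: "y \<in> e"
    and \<theta>: "0 < \<theta>" "\<theta> \<le> 2 ^ c e {y}" "\<theta> \<le> real (card (rel e))"
  shows "s {y} \<le> log IN (real (card (rel e)) / \<theta>)"
proof -
  let ?k = "card (proj {y} (restrict_config rel c e))"
  have "s {y} \<le> s {} + dlog IN {} {y} (restrict_config rel c e)"
    using feasible_step[OF f e, of "{}" "{}" "{y}"] y by simp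
  then have "s {y} \<le> log IN (real ?k)" by (simp add: feasible_empty[OF f] dlog_empty)
  also have "\<dots> \<le> log IN (real (card (rel e)) / \<theta>)"
  proof (rule log_of_nat_le[OF IN])
    have "?k * 2 ^ c e {y} \<le> card (rel e)"
      by (rule card_proj_singleton_restrict_config[of rel e y c, OF fin y])
    then have "real ?k * 2 ^ c e {y} \<le> real (card (rel e))"
      using of_nat_le_iff[of "?k * 2 ^ c e {y}" "card (rel e)", where 'a=real] by simp
    moreover have "real ?k * \<theta> \<le> real ?k * 2 ^ c e {y}" using \<theta>(2) by (rule mult_left_mono) simp
    ultimately show "real ?k \<le> real (card (rel e)) / \<theta>" using \<theta>(1) by (simp add: field_simps)
    show "1 \<le> real (card (rel e)) / \<theta>" using \<theta>(1,3) by simp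
  qed
  finally show ?thesis .
qed

lemma feasible_Union_le:
  assumes f: "feasible IN Att E (restrict_config rel c) s" and IN: "1 < IN"
    and "finite E'" "E' \<subseteq> E" and edges: "\<And>e. e \<in> E \<Longrightarrow> e \<subseteq> Att \<and> finite (rel e)"
  shows "s (\<Union>E') \<le> (\<Sum>e\<in>E'. log IN (real (card (rel e))))"
  using assms(3,4)
proof (induction E' rule: finite_induct)
  case empty
  then show ?case using feasible_empty[OF f] by simp
next
  case (insert e E')
  have "s (e \<union> \<Union>E') \<le> s (\<Union>E') + log IN (real (card (rel e)))"
    using insert.prems edges by (intro feasible_edge_le[OF f IN]) auto
  then show ?case using insert by simp
qed

section \<open>Uniform instances over a 1-series-parallel graph\<close>

locale series_parallel_join =
  fixes V :: "'v set" and E :: "'v set set" and xs xt :: 'v and Ps :: "'v list set"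
    and rel :: "'v set \<Rightarrow> ('v \<Rightarrow> 'd) set" and N :: nat and c :: "'v set \<Rightarrow> 'v set \<Rightarrow> nat"
  assumes finite_V: "finite V"
    and source_ne_sink: "xs \<noteq> xt"
    and finite_paths: "finite Ps"
    and paths: "\<And>p. p \<in> Ps \<Longrightarrow> 2 \<le> length p \<and> hd p = xs \<and> last p = xt \<and> distinct p"
    and paths_overlap: "\<And>p q. p \<in> Ps \<Longrightarrow> q \<in> Ps \<Longrightarrow> p \<noteq> q \<Longrightarrow> set p \<inter> set q = {xs, xt}"
    and V_eq: "V = {xs, xt} \<union> (\<Union>p\<in>Ps. set p)"
    and E_eq: "E = (\<Union>p\<in>Ps. path_edges p)"
    and source_sink_edge: "{xs, xt} \<in> E"
    and uniform: "join_instance E rel N"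
    and N_large: "4 ^ card V \<le> N"
begin

abbreviation IN :: real where "IN \<equiv> real (input_size E rel)"

abbreviation R :: "'v set \<Rightarrow> ('v \<Rightarrow> 'd) set" where "R \<equiv> restrict_config rel c"

definition ell :: real where "ell = log IN (real N)"

definition \<delta> :: real where "\<delta> = 1 / (4 * real (card V))"

definition heavy :: "'v \<Rightarrow> bool" where
  "heavy x \<longleftrightarrow> (\<exists>e\<in>E. x \<in> e \<and> real N powr \<delta> \<le> 2 ^ c e {x})"

definition low_width :: "'v set \<Rightarrow> bool" where
  "low_width F \<longleftrightarrow> (\<forall>s. feasible IN V E R s \<longrightarrow> s F \<le> (2 - \<delta>) * ell)"

lemma edge_subset_V: "e \<in> E \<Longrightarrow> e \<subseteq> V"
  using E_eq V_eq unfolding path_edges_def by auto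

lemma finite_E: "finite E"
  using finite_subset[of E "Pow V"] edge_subset_V finite_V by auto

lemma path_edge_in_E: "p \<in> Ps \<Longrightarrow> i + 1 < length p \<Longrightarrow> {p ! i, p ! (i + 1)} \<in> E"
  unfolding E_eq path_edges_def by blast

lemma rel_uniform: "e \<in> E \<Longrightarrow> rel e \<subseteq> extensional e \<and> finite (rel e) \<and> card (rel e) = N"
  using uniform unfolding join_instance_def by blast

lemma card_V_ge_2: "2 \<le> card V"
  using card_mono[OF finite_V, of "{xs, xt}"] source_ne_sink V_eq by auto

lemma N_ge_16: "16 \<le> N"
proof -
  have "(4::nat) ^ 2 \<le> 4 ^ card V" using card_V_ge_2 by (intro power_increasing) auto
  then show ?thesis using N_large by simp
qed

lemma N_le_IN: "real N \<le> IN"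
proof -
  have "card E \<ge> 1" using source_sink_edge finite_E by (metis One_nat_def Suc_leI card_gt_0_iff empty_iff)
  moreover have "IN = real (card E) * real N" unfolding input_size_def using rel_uniform by simp
  ultimately show ?thesis using mult_right_mono[of 1 "real (card E)" "real N"] by simp
qed

lemma IN_gt_1: "1 < IN" using N_le_IN N_ge_16 by linarith

lemma ell_pos: "0 < ell" unfolding ell_def using IN_gt_1 N_ge_16 by simp

lemma ell_le_1: "ell \<le> 1" unfolding ell_def using IN_gt_1 N_ge_16 N_le_IN by simp

lemma delta_pos: "0 < \<delta>" unfolding \<delta>_def using card_V_ge_2 by simp

lemma delta_le: "\<delta> \<le> 1 / 8" unfolding \<delta>_def using card_V_ge_2 by (simp add: field_simps)

lemma edge_step:
  "feasible IN V E R s \<Longrightarrow> e \<in> E \<Longrightarrow> X \<subseteq> V \<Longrightarrow> s (e \<union> X) \<le> s X + ell"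
  using feasible_edge_le[OF _ IN_gt_1] rel_uniform unfolding ell_def by fastforce

lemma light_step:
  assumes "feasible IN V E R s" "e \<in> E" "X \<subseteq> V" "y \<in> e" "y \<in> X" "\<not> heavy y"
  shows "s (e \<union> X) \<le> s X + (log IN 2 + \<delta> * ell)"
proof -
  have "2 ^ c e {y} < real N powr \<delta>" using assms(2,4,6) unfolding heavy_def by force
  then have "log IN (2 ^ Suc (c e {y})) \<le> log IN (2 * real N powr \<delta>)"
    using IN_gt_1 N_ge_16 by (subst log_le_cancel_iff) auto
  also have "\<dots> = log IN 2 + \<delta> * ell"
    unfolding ell_def using N_ge_16 IN_gt_1 by (simp add: log_mult log_powr)
  finally show ?thesis
    using feasible_light_le[OF assms(1) IN_gt_1 assms(2,3)] rel_uniform[OF assms(2)] assms(4,5) by fastforce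
qed

lemma heavy_singleton_le:
  assumes "feasible IN V E R s" "heavy y"
  shows "s {y} \<le> (1 - \<delta>) * ell"
proof -
  obtain e where e: "e \<in> E" "y \<in> e" and le: "real N powr \<delta> \<le> 2 ^ c e {y}"
    using assms(2) unfolding heavy_def by blast
  have "real N powr \<delta> \<le> real N"
    using powr_mono[of \<delta> 1 "real N"] N_ge_16 delta_le by simp
  then have "s {y} \<le> log IN (real N / real N powr \<delta>)"
    using feasible_heavy_le[OF assms(1) IN_gt_1 e(1) _ e(2) _ le] rel_uniform[OF e(1)] N_ge_16 by simp
  also have "real N / real N powr \<delta> = real N powr (1 - \<delta>)"
    using N_ge_16 by (simp add: powr_diff)
  also have "log IN (real N powr (1 - \<delta>)) = (1 - \<delta>) * ell"
    unfolding ell_def using N_ge_16 by (simp add: log_powr)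
  finally show ?thesis .
qed

lemma walk_budget: "ell + real (card V) * (log IN 2 + \<delta> * ell) \<le> (2 - \<delta>) * ell"
proof -
  have "real (card V) * (\<delta> * ell) = ell / 4" unfolding \<delta>_def using card_V_ge_2 by simp
  moreover have "\<delta> * ell \<le> ell / 8" using mult_right_mono[OF delta_le, of ell] ell_pos by simp
  moreover have "2 * (real (card V) * log IN 2) \<le> ell"
  proof -
    have "(2::real) ^ (2 * card V) \<le> real N"
      using of_nat_le_iff[of "4 ^ card V" N, where 'a=real] N_large by (simp add: power_mult)
    then have "log IN (2 ^ (2 * card V)) \<le> ell"
      unfolding ell_def using IN_gt_1 N_ge_16 by (subst log_le_cancel_iff) auto
    then show ?thesis by (simp add: log_nat_power)
  qed
  ultimately show ?thesis using ell_pos unfolding distrib_left left_diff_distrib by linarith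
qed

lemma light_walk:
  assumes f: "feasible IN V E R s"
  shows "X \<subseteq> V \<Longrightarrow> q \<noteq> [] \<Longrightarrow> hd q \<in> X \<Longrightarrow>
    (\<And>i. Suc i < length q \<Longrightarrow> {q ! i, q ! Suc i} \<in> E \<and> \<not> heavy (q ! i)) \<Longrightarrow>
    s (X \<union> set q) \<le> s X + real (length q - 1) * (log IN 2 + \<delta> * ell)"
proof (induction q arbitrary: X)
  case Nil
  then show ?case by simp
next
  case (Cons a q)
  show ?case
  proof (cases q)
    case Nil
    then show ?thesis using Cons.prems(3) by (simp add: insert_absorb)
  next
    case (Cons b q')
    have edge: "{a, b} \<in> E" and light: "\<not> heavy a" using Cons.prems(4)[of 0] \<open>q = b # q'\<close> by simp_all
    let ?w = "log IN 2 + \<delta> * ell"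
    have "insert b X \<subseteq> V" using edge_subset_V[OF edge] Cons.prems(1) by blast
    then have "s (insert b X \<union> set q) \<le> s (insert b X) + real (length q - 1) * ?w"
      using Cons.prems(4)[of "Suc i" for i] \<open>q = b # q'\<close> by (intro Cons.IH) auto
    moreover have "s (insert b X) \<le> s X + ?w"
      using light_step[OF f edge Cons.prems(1), of a] light Cons.prems(3)
      by (simp add: insert_absorb insert_commute)
    moreover have "X \<union> set (a # q) = insert b X \<union> set q"
      using Cons.prems(3) \<open>q = b # q'\<close> by auto
    then have "s (X \<union> set (a # q)) = s (insert b X \<union> set q)" by (rule arg_cong)
    moreover have "real (length (a # q) - 1) * ?w = real (length q - 1) * ?w + ?w"
      using \<open>q = b # q'\<close> by (simp add: algebra_simps)
    ultimately show ?thesis by linarith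
  qed
qed

lemma low_widthI: "(\<And>s. feasible IN V E R s \<Longrightarrow> s F \<le> (2 - \<delta>) * ell) \<Longrightarrow> low_width F"
  unfolding low_width_def by blast

lemma source_sink_le: "feasible IN V E R s \<Longrightarrow> s {xs, xt} \<le> ell"
  using edge_step[OF _ source_sink_edge, of s "{}"] feasible_empty by fastforce

lemma low_width_source_sink: "low_width {xs, xt}"
proof (rule low_widthI)
  fix s assume "feasible IN V E R s"
  then have "s {xs, xt} \<le> ell" by (rule source_sink_le)
  also have "\<dots> \<le> (2 - \<delta>) * ell" using delta_le ell_pos by (simp add: algebra_simps)
  finally show "s {xs, xt} \<le> (2 - \<delta>) * ell" .
qed

lemma low_width_light_path:
  assumes p: "p \<in> Ps" and light: "\<And>i. i + 2 < length p \<Longrightarrow> \<not> heavy (p ! i)"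
  shows "low_width (set p)"
proof (rule low_widthI)
  fix s assume f: "feasible IN V E R s"
  let ?q = "butlast p" and ?w = "log IN 2 + \<delta> * ell"
  have p2: "2 \<le> length p" "hd p = xs" "last p = xt" "distinct p" using paths[OF p] by auto
  have "p \<noteq> []" using p2(1) by auto
  have q: "?q \<noteq> []" using p2(1) by (simp flip: length_greater_0_conv)
  then have hd_q: "hd ?q = xs"
    using p2 \<open>p \<noteq> []\<close> by (auto simp: hd_conv_nth nth_butlast simp del: length_butlast)
  have "{?q ! i, ?q ! Suc i} \<in> E \<and> \<not> heavy (?q ! i)" if "Suc i < length ?q" for i
    using that path_edge_in_E[OF p, of i] light[of i] by (simp add: nth_butlast)
  then have "s ({xs, xt} \<union> set ?q) \<le> s {xs, xt} + real (length ?q - 1) * ?w"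
    using light_walk[OF f, of "{xs, xt}" ?q] q hd_q V_eq by auto
  moreover have "set p = insert xt (set ?q)"
    using p2 by (induction p rule: rev_induct) auto
  then have "{xs, xt} \<union> set ?q = set p" using q hd_q hd_in_set by fastforce
  ultimately have walk: "s (set p) \<le> s {xs, xt} + real (length ?q - 1) * ?w" by simp
  have "real (length ?q - 1) \<le> real (card V)"
  proof -
    have "length p = card (set p)" using p2 by (simp add: distinct_card)
    also have "\<dots> \<le> card V" using V_eq p finite_V by (intro card_mono) auto
    finally show ?thesis by simp
  qed
  then have "real (length ?q - 1) * ?w \<le> real (card V) * ?w"
    using IN_gt_1 delta_pos ell_pos by (intro mult_right_mono) auto
  then have "s (set p) \<le> ell + real (card V) * ?w" using walk source_sink_le[OF f] by linarith
  then show "s (set p) \<le> (2 - \<delta>) * ell" using walk_budget by linarith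
qed

lemma low_width_fan_bag:
  assumes "heavy y" "e \<in> E"
  shows "low_width (insert y e)"
proof (rule low_widthI)
  fix s assume f: "feasible IN V E R s"
  have "y \<in> V" using assms(1) edge_subset_V unfolding heavy_def by blast
  then have "s (e \<union> {y}) \<le> s {y} + ell" using edge_step[OF f assms(2)] by blast
  then show "s (insert y e) \<le> (2 - \<delta>) * ell"
    using heavy_singleton_le[OF f assms(1)] by (simp add: algebra_simps)
qed

lemma cycle_edges_subset_E:
  assumes "p \<in> Ps"
  shows "cycle_edges p \<subseteq> E"
proof -
  have "p \<noteq> []" "hd p = xs" "last p = xt" using paths[OF assms] by auto
  moreover have "path_edges p \<subseteq> E" using assms E_eq by blast
  ultimately show ?thesis using cycle_edges_eq[of p] source_sink_edge by (simp add: insert_commute)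
qed

lemma leg_decomposition_light:
  assumes p: "p \<in> Ps" and light: "\<And>j. j + 2 < length p \<Longrightarrow> \<not> heavy (p ! j)"
  shows "\<exists>n B j. path_decomposition n B \<and> j < n \<and> {xs, xt} \<subseteq> B j \<and>
           (\<forall>k<n. B k \<subseteq> set p \<and> low_width (B k)) \<and> (\<forall>e\<in>path_edges p. \<exists>k<n. e \<subseteq> B k)"
proof -
  have "path_decomposition 1 (\<lambda>_. set p)" unfolding path_decomposition_def by simp
  moreover have "{xs, xt} \<subseteq> set p" using paths[OF p] by (auto intro: hd_in_set last_in_set)
  moreover have "low_width (set p)" using light by (rule low_width_light_path[OF p])
  moreover have "\<forall>e\<in>path_edges p. e \<subseteq> set p" unfolding path_edges_def by auto
  ultimately show ?thesis by (intro exI[of _ 1] exI[of _ "\<lambda>_. set p"] exI[of _ 0]) auto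
qed

lemma leg_decomposition_fan:
  assumes p: "p \<in> Ps" and j: "j + 2 < length p" "heavy (p ! j)"
  shows "\<exists>n B j. path_decomposition n B \<and> j < n \<and> {xs, xt} \<subseteq> B j \<and>
           (\<forall>k<n. B k \<subseteq> set p \<and> low_width (B k)) \<and> (\<forall>e\<in>path_edges p. \<exists>k<n. e \<subseteq> B k)"
proof -
  have ends: "p \<noteq> []" "hd p = xs" "last p = xt" using paths[OF p] by auto
  define q where "q = rotate j p"
  define B where "B k = {q ! 0, q ! (k + 1), q ! (k + 2)}" for k
  have q: "distinct q" "length q = length p" "set q = set p" "cycle_edges q = cycle_edges p"
    using paths[OF p] unfolding q_def by (simp_all add: cycle_edges_rotate)
  have "q ! 0 = p ! j" using j(1) nth_rotate[of 0 p j] unfolding q_def by fastforce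
  have covered: "\<exists>k<length q - 2. e \<subseteq> B k" if "e \<in> cycle_edges p" for e
    using fan_covers_cycle_edges[of q e] that j(1) q unfolding B_def by simp
  have "path_decomposition (length q - 2) B"
    unfolding B_def by (rule fan_path_decomposition) (use q in simp)
  moreover have "{xs, xt} \<in> cycle_edges p"
    using cycle_edges_eq[OF ends(1)] ends by (simp add: insert_commute)
  then obtain k where "k < length q - 2" "{xs, xt} \<subseteq> B k" using covered by blast
  moreover have "B k \<subseteq> set p \<and> low_width (B k)" if "k < length q - 2" for k
  proof
    show "B k \<subseteq> set p" using that q unfolding B_def by (auto intro!: nth_mem)
    have "{q ! (k + 1), q ! (Suc (k + 1) mod length q)} \<in> cycle_edges q"
      unfolding cycle_edges_def using that by (intro CollectI exI[of _ "k + 1"]) auto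
    then have "{q ! (k + 1), q ! (k + 2)} \<in> E"
      using that q cycle_edges_subset_E[OF p] by auto
    then show "low_width (B k)" unfolding B_def
      using low_width_fan_bag j(2) \<open>q ! 0 = p ! j\<close> by auto
  qed
  moreover have "path_edges p \<subseteq> cycle_edges p"
    using cycle_edges_eq[OF ends(1)] by auto
  then have "\<forall>e\<in>path_edges p. \<exists>k<length q - 2. e \<subseteq> B k" using covered by blast
  ultimately show ?thesis by blast
qed

lemma leg_decomposition:
  assumes p: "p \<in> Ps"
  shows "\<exists>n B j. path_decomposition n B \<and> j < n \<and> {xs, xt} \<subseteq> B j \<and>
           (\<forall>k<n. B k \<subseteq> set p \<and> low_width (B k)) \<and> (\<forall>e\<in>path_edges p. \<exists>k<n. e \<subseteq> B k)"
proof (cases "\<exists>j. j + 2 < length p \<and> heavy (p ! j)")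
  case True
  then obtain j where "j + 2 < length p" "heavy (p ! j)" by blast
  then show ?thesis by (rule leg_decomposition_fan[OF p])
next
  case False
  then show ?thesis using leg_decomposition_light[OF p] by blast
qed

lemma low_width_ghd: "\<exists>T TE \<chi>. is_ghd V E T TE \<chi> \<and> (\<forall>t\<in>T. low_width (\<chi> t))"
proof -
  have "\<exists>T TE (\<chi> :: nat \<Rightarrow> 'v set). tree_decomposition T TE \<chi> \<and> {xs, xt} \<in> \<chi> ` T \<and>
      (\<forall>b\<in>\<chi> ` T. b \<subseteq> {xs, xt} \<union> \<Union>(set ` Ps) \<and> low_width b) \<and>
      (\<forall>p\<in>Ps. \<forall>e\<in>path_edges p. \<exists>b\<in>\<chi> ` T. e \<subseteq> b)"
    by (rule tree_decomposition_star[OF finite_paths _ low_width_source_sink leg_decomposition])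
      (use paths_overlap in auto)
  then obtain T TE and \<chi> :: "nat \<Rightarrow> 'v set" where d: "tree_decomposition T TE \<chi>"
    and "\<forall>b\<in>\<chi> ` T. b \<subseteq> {xs, xt} \<union> \<Union>(set ` Ps) \<and> low_width b"
    and "\<forall>p\<in>Ps. \<forall>e\<in>path_edges p. \<exists>b\<in>\<chi> ` T. e \<subseteq> b"
    by (elim exE conjE) (rule that)
  then have bags: "\<forall>t\<in>T. \<chi> t \<subseteq> {xs, xt} \<union> \<Union>(set ` Ps) \<and> low_width (\<chi> t)"
    and cover: "\<forall>p\<in>Ps. \<forall>e\<in>path_edges p. \<exists>t\<in>T. e \<subseteq> \<chi> t"
    by auto
  have "is_ghd V E T TE \<chi>"
    using d bags cover unfolding is_ghd_def tree_decomposition_def V_eq E_eq by blast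
  then show ?thesis using bags by blast
qed

lemma Union_E: "\<Union>E = V"
proof
  show "\<Union>E \<subseteq> V" using edge_subset_V by blast
  show "V \<subseteq> \<Union>E"
  proof
    fix v assume "v \<in> V"
    then consider "v \<in> {xs, xt}" | p where "p \<in> Ps" "v \<in> set p" using V_eq by blast
    then show "v \<in> \<Union>E"
    proof cases
      case 1
      then show ?thesis using source_sink_edge by blast
    next
      case 2
      then obtain i where i: "i < length p" "p ! i = v" by (auto simp: in_set_conv_nth)
      have "2 \<le> length p" using paths[OF 2(1)] by simp
      show ?thesis
      proof (cases "i + 1 < length p")
        case True
        then show ?thesis using path_edge_in_E[OF 2(1) True] i by blast
      next
        case False
        then have "i - 1 + 1 < length p" "i - 1 + 1 = i" using i(1) \<open>2 \<le> length p\<close> by auto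
        then show ?thesis using path_edge_in_E[OF 2(1), of "i - 1"] i by (metis UnionI insertCI)
      qed
    qed
  qed
qed

lemma feasible_le_card_E: "feasible IN V E R s \<Longrightarrow> F \<subseteq> V \<Longrightarrow> s F \<le> real (card E) * ell"
  using feasible_mono[of IN V E R s F V] feasible_Union_le[of IN V E rel c s E] IN_gt_1 finite_E
    edge_subset_V rel_uniform Union_E unfolding ell_def by simp

lemma MW_le: "MW IN V E R \<le> 2 - \<delta>"
proof -
  obtain T TE \<chi> where g: "is_ghd V E T TE \<chi>" and low: "\<forall>t\<in>T. low_width (\<chi> t)"
    using low_width_ghd by blast
  have "(2 - \<delta>) * ell \<le> 2 - \<delta>" using ell_le_1 delta_le by (simp add: mult_left_le)
  then have "mval IN V E R (\<chi> t) \<le> 2 - \<delta>" if "t \<in> T" for t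
    using low that IN_gt_1 unfolding low_width_def by (intro mval_le) force+
  moreover have "finite T" "T \<noteq> {}" using g unfolding is_ghd_def is_tree_def by auto
  ultimately have "MW_ghd IN V E R T \<chi> \<le> 2 - \<delta>" unfolding MW_ghd_def by simp
  moreover have "MW IN V E R \<le> MW_ghd IN V E R T \<chi>"
    using g IN_gt_1 feasible_le_card_E by (intro MW_le_MW_ghd mval_nonneg) auto
  ultimately show ?thesis by linarith
qed

end

lemma degree_configs_nonempty:
  assumes "\<forall>e\<in>E. e \<noteq> {}"
  shows "(\<lambda>e A. if A = {} then nat \<lfloor>log 2 (real (card (rel e)))\<rfloor> else 0) \<in> degree_configs E rel"
  unfolding degree_configs_def using assms by auto

lemma m_width_le_series_parallel:
  assumes "series_parallel_join V E xs xt Ps rel N"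
  shows "m_width V E rel \<le> 2 - 1 / (4 * real (card V))"
proof -
  have "MW (real (input_size E rel)) V E (restrict_config rel c) \<le> 2 - 1 / (4 * real (card V))" for c
    using series_parallel_join.MW_le[OF assms] series_parallel_join.\<delta>_def[OF assms] by simp
  moreover have "\<forall>e\<in>E. e \<noteq> {}"
    using series_parallel_join.E_eq[OF assms] unfolding path_edges_def by blast
  then have "degree_configs E rel \<noteq> {}" using degree_configs_nonempty by blast
  ultimately show ?thesis unfolding m_width_def by (intro cSup_least) auto
qed

theorem lemmaF3:
  fixes V :: "'v set" and E :: "'v set set" and xs xt :: 'v
  assumes "finite V"
    and "one_sp_graph V E xs xt"
    and "{xs, xt} \<in> E"
  shows "\<exists>\<epsilon>::real. \<epsilon> > 0 \<and> (\<exists>N0::nat. \<forall>N\<ge>N0. \<forall>rel :: 'v set \<Rightarrow> ('v \<Rightarrow> 'd) set.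
           join_instance E rel N \<longrightarrow> m_width V E rel \<le> 2 - \<epsilon>)"
proof -
  obtain Ps where sp: "xs \<noteq> xt" "finite Ps"
      "\<forall>p\<in>Ps. 2 \<le> length p \<and> hd p = xs \<and> last p = xt \<and> distinct p"
      "\<forall>p\<in>Ps. \<forall>q\<in>Ps. p \<noteq> q \<longrightarrow> set p \<inter> set q = {xs, xt}"
      "V = {xs, xt} \<union> (\<Union>p\<in>Ps. set p)" "E = (\<Union>p\<in>Ps. path_edges p)"
    using assms(2) unfolding one_sp_graph_def by blast
  have "card V \<noteq> 0" using assms(1) sp(5) by simp
  then have "0 < 1 / (4 * real (card V))" by simp
  moreover have "m_width V E rel \<le> 2 - 1 / (4 * real (card V))"
    if "4 ^ card V \<le> N" "join_instance E rel N" for N and rel :: "'v set \<Rightarrow> ('v \<Rightarrow> 'd) set"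
    using assms sp that by (intro m_width_le_series_parallel, unfold_locales) blast+
  ultimately show ?thesis by blast
qed

end
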